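(* For every integer $n\ge0$ and every complex $z$ with $\mathrm{Re}\,z>0$, $$\int_0^\infty e^{-zu}\,\nu^{*(n)}(u)\,du=N_1(z)^n,$$ where for $n=0$ the left-hand side is interpreted as the Laplace transform of the Dirac delta at $0$, namely $1$.
   Context: $\nu(u)=\frac2{\sqrt\pi}\frac{\sqrt u}{2u+1}$ for $u\ge0$; $\nu^{*(0)}$ is the Dirac delta at $0$ and $\nu^{*(n)}$, $n\ge1$, is the $n$-fold convolution $(f*g)(t)=\int_0^tf(s)g(t-s)ds$ of $\nu$ with itself. $\Psi(w)=\int_0^\infty x\exp(-\tfrac12x^2+wx)dx$ for complex $w$, and $N_1(z)=\Psi(-\sqrt z)/\sqrt z$ for $z\in\mathbb C\setminus(-\infty,0]$, with the principal branch of $\sqrt z$. *)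

theory Defs
  imports "HOL-Analysis.Analysis"
begin

definition nu :: "real \<Rightarrow> real" where
  "nu u = (if u \<ge> 0 then 2 / sqrt pi * sqrt u / (2 * u + 1) else 0)"

definition conv0 :: "(real \<Rightarrow> real) \<Rightarrow> (real \<Rightarrow> real) \<Rightarrow> real \<Rightarrow> real" where
  "conv0 f g t = integral {0..t} (\<lambda>s. f s * g (t - s))"

text \<open>n-fold convolution power of nu, for n \<ge> 1: nu_conv_pow 1 = nu,
  nu_conv_pow (n+1) = nu * nu_conv_pow n. (The case n = 0, the Dirac delta,
  is not a function and is treated separately in the statement.)\<close>
fun nu_conv_pow :: "nat \<Rightarrow> real \<Rightarrow> real" where
  "nu_conv_pow 0 = (\<lambda>_. 0)"
| "nu_conv_pow (Suc 0) = nu"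
| "nu_conv_pow (Suc (Suc n)) = conv0 nu (nu_conv_pow (Suc n))"

definition Psi :: "complex \<Rightarrow> complex" where
  "Psi w = integral {0..} (\<lambda>x::real. of_real x * exp (of_real (- (x\<^sup>2) / 2) + w * of_real x))"

definition N1 :: "complex \<Rightarrow> complex" where
  "N1 z = Psi (- csqrt z) / csqrt z"

end

theory Submission
  imports Defs "HOL-Complex_Analysis.Complex_Analysis" "HOL-Real_Asymp.Real_Asymp"
begin

(*
  The Laplace transform turns convolution into multiplication (Tonelli and Fubini on the
  product of two half-lines), so everything reduces to n = 1, i.e. to  L nu z = N1 z.
  Both sides are holomorphic on Re z > 0 -- N1 z is the Laplace transform of the Rayleigh
  density psi x = x exp(-x^2/2) at sqrt z, divided by sqrt z -- so by analytic continuation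
  it suffices to take z = s^2 with s > 0. There one writes
    1/(2u+1) = int_0^oo (x+s) exp(-(2u+1)(x^2/2 + s x)) dx,
  exchanges the order of integration and uses  int_0^oo sqrt u exp(-w u) du = sqrt pi/(2 w^(3/2));
  this turns  L nu (s^2)  into  int_0^oo E x/(x+s)^2 dx  with  E x = exp(-x^2/2 - s x).
  The exact derivatives  (-E/(x+s))' = E + E/(x+s)^2  and  (-E)' = (x+s) E  then identify
  this integral with  L psi s / s.
*)

section \<open>Laplace transforms of functions on the half-line\<close>

definition laplace :: "(real \<Rightarrow> real) \<Rightarrow> complex \<Rightarrow> complex" where
  "laplace \<phi> z = (\<integral>x. exp (- (z * of_real x)) * of_real (\<phi> x) \<partial>lborel)"

definition laplace_admissible :: "(real \<Rightarrow> real) \<Rightarrow> bool" where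
  "laplace_admissible \<phi> \<longleftrightarrow> \<phi> \<in> borel_measurable borel \<and> (\<forall>x. 0 \<le> \<phi> x) \<and> (\<forall>x<0. \<phi> x = 0) \<and>
     (\<forall>\<sigma>>0. integrable lborel (\<lambda>x. exp (- \<sigma> * x) * \<phi> x))"

lemma
  assumes "laplace_admissible \<phi>"
  shows laplace_admissible_measurable: "\<phi> \<in> borel_measurable borel"
    and laplace_admissible_nonneg: "0 \<le> \<phi> x"
    and laplace_admissible_vanishes: "x < 0 \<Longrightarrow> \<phi> x = 0"
    and laplace_admissible_integrable: "\<sigma> > 0 \<Longrightarrow> integrable lborel (\<lambda>x. exp (- \<sigma> * x) * \<phi> x)"
  using assms unfolding laplace_admissible_def by auto

lemma laplace_admissible_nn_integral_finite:
  assumes "laplace_admissible \<phi>" "\<sigma> > 0"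
  shows "(\<integral>\<^sup>+x. ennreal (exp (- \<sigma> * x) * \<phi> x) \<partial>lborel) < \<infinity>"
proof -
  have "(\<integral>\<^sup>+x. ennreal (norm (exp (- \<sigma> * x) * \<phi> x)) \<partial>lborel) < \<infinity>"
    using laplace_admissible_integrable[OF assms] by (simp add: integrable_iff_bounded)
  then show ?thesis
    using laplace_admissible_nonneg[OF assms(1)] by (simp add: abs_mult)
qed

lemma laplace_admissible_bounded:
  assumes "\<phi> \<in> borel_measurable borel" "\<And>x. 0 \<le> \<phi> x" "\<And>x. x < 0 \<Longrightarrow> \<phi> x = 0"
    and bound: "\<And>x. \<phi> x \<le> C"
  shows "laplace_admissible \<phi>"
  unfolding laplace_admissible_def
proof (intro conjI allI impI)
  fix \<sigma> :: real assume "\<sigma> > 0"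
  have "integrable lebesgue (\<lambda>x. indicat_real {0..} x *\<^sub>R exp (- \<sigma> * x))"
    using \<open>\<sigma> > 0\<close>
    by (intro nonnegative_absolutely_integrable_1[unfolded set_integrable_def]
        integrable_on_exp_minus_to_infinity) auto
  then have "integrable lborel (\<lambda>x. C * (indicator {0..} x * exp (- \<sigma> * x)))"
    by (simp add: integrable_completion)
  then show "integrable lborel (\<lambda>x. exp (- \<sigma> * x) * \<phi> x)"
  proof (rule Bochner_Integration.integrable_bound)
    show "AE x in lborel. norm (exp (- \<sigma> * x) * \<phi> x) \<le> norm (C * (indicator {0..} x * exp (- \<sigma> * x)))"
    proof (intro AE_I2)
      fix x :: real
      have "0 \<le> C" using assms(2)[of x] bound[of x] by simp
      then show "norm (exp (- \<sigma> * x) * \<phi> x) \<le> norm (C * (indicator {0..} x * exp (- \<sigma> * x)))"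
        using assms(2,3)[of x] bound[of x] by (cases "x < 0") (auto simp: abs_mult indicator_def)
    qed
  qed (use assms(1) in measurable)
qed (use assms in auto)

lemma integrable_laplace:
  assumes "laplace_admissible \<phi>" "Re z > 0"
  shows "integrable lborel (\<lambda>x. exp (- (z * of_real x)) * of_real (\<phi> x))"
  using laplace_admissible_integrable[OF assms]
proof (rule Bochner_Integration.integrable_bound)
  show "AE x in lborel. norm (exp (- (z * of_real x)) * of_real (\<phi> x)) \<le> norm (exp (- Re z * x) * \<phi> x)"
    using laplace_admissible_nonneg[OF assms(1)] by (auto simp: norm_mult norm_exp_eq_Re)
qed (use laplace_admissible_measurable[OF assms(1)] in measurable)

lemma laplace_has_integral:
  assumes "laplace_admissible \<phi>" "Re z > 0"
  shows "((\<lambda>x::real. exp (- (z * of_real x)) * of_real (\<phi> x)) has_integral laplace \<phi> z) {0..}"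
proof -
  define F where "F x = exp (- (z * of_real x)) * of_real (\<phi> x)" for x :: real
  have int: "set_integrable lborel {0..} F"
    unfolding set_integrable_def F_def
    using integrable_mult_indicator[OF _ integrable_laplace[OF assms], of "{0..}"] by simp
  have "laplace \<phi> z = (LINT x:{0..}|lborel. F x)"
    unfolding laplace_def set_lebesgue_integral_def F_def
    by (intro Bochner_Integration.integral_cong)
      (auto simp: indicator_def laplace_admissible_vanishes[OF assms(1)])
  also have "\<dots> = integral {0..} F"
    by (rule set_borel_integral_eq_integral(2)[OF int])
  finally show ?thesis
    using set_borel_integral_eq_integral(1)[OF int] by (simp add: F_def[abs_def] integrable_integral)
qed

lemma laplace_of_real:
  "laplace \<phi> (of_real r) = of_real (\<integral>x. exp (- r * x) * \<phi> x \<partial>lborel)"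
proof -
  have "laplace \<phi> (of_real r) = (\<integral>x. complex_of_real (exp (- r * x) * \<phi> x) \<partial>lborel)"
    unfolding laplace_def by (intro Bochner_Integration.integral_cong) (simp_all flip: exp_of_real)
  then show ?thesis by (simp only: integral_complex_of_real)
qed

lemma holomorphic_on_integral_laplace_interval:
  assumes "continuous_on UNIV \<phi>"
  shows "(\<lambda>z. integral {0..a} (\<lambda>x. exp (- (z * of_real x)) * of_real (\<phi> x))) holomorphic_on UNIV"
proof -
  have "(\<lambda>z. integral (cbox 0 a) (\<lambda>x. exp (- (z * of_real x)) * of_real (\<phi> x))) holomorphic_on UNIV"
  proof (rule leibniz_rule_holomorphic[where fx = "\<lambda>z x. - of_real x * exp (- (z * of_real x)) * of_real (\<phi> x)"])
    fix z :: complex and x :: real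
    show "((\<lambda>z. exp (- (z * of_real x)) * of_real (\<phi> x)) has_field_derivative
        - of_real x * exp (- (z * of_real x)) * of_real (\<phi> x)) (at z within UNIV)"
      by (auto intro!: derivative_eq_intros)
    show "(\<lambda>x. exp (- (z * of_real x)) * of_real (\<phi> x)) integrable_on cbox 0 a"
      by (intro integrable_continuous continuous_intros continuous_on_subset[OF assms]) auto
  next
    have \<phi>_snd: "continuous_on UNIV (\<lambda>p::complex \<times> real. \<phi> (snd p))"
      by (rule continuous_on_compose2[OF assms continuous_on_snd]) auto
    have "continuous_on UNIV
        (\<lambda>(z :: complex, x :: real). - of_real x * exp (- (z * of_real x)) * of_real (\<phi> x))"
      unfolding case_prod_beta by (intro continuous_intros \<phi>_snd)
    then show "continuous_on (UNIV \<times> cbox 0 a)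
        (\<lambda>(z :: complex, x :: real). - of_real x * exp (- (z * of_real x)) * of_real (\<phi> x))"
      by (rule continuous_on_subset) auto
  qed auto
  then show ?thesis by (simp add: cbox_interval)
qed

lemma tendsto_integral_indicator_greaterThan:
  fixes f :: "real \<Rightarrow> real"
  assumes "integrable lborel f"
  shows "(\<lambda>n. \<integral>x. indicator {real n<..} x * f x \<partial>lborel) \<longlonglongrightarrow> 0"
proof -
  have "(\<lambda>n. \<integral>x. indicator {real n<..} x * f x \<partial>lborel) \<longlonglongrightarrow> (\<integral>x. 0 \<partial>(lborel :: real measure))"
  proof (rule integral_dominated_convergence[where w = "\<lambda>x. norm (f x)" and f = "\<lambda>x. 0"
        and s = "\<lambda>n x. indicator {real n<..} x * f x"])
    show "AE x in lborel. (\<lambda>n. indicator {real n<..} x * f x) \<longlonglongrightarrow> 0"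
    proof (rule AE_I2)
      fix x :: real
      obtain N :: nat where "x < real N" using reals_Archimedean2 by blast
      then have "\<forall>\<^sub>F n in sequentially. indicator {real n<..} x * f x = 0"
        by (intro eventually_sequentiallyI[of N]) (auto simp: indicator_def)
      then show "(\<lambda>n. indicator {real n<..} x * f x) \<longlonglongrightarrow> 0"
        by (rule tendsto_eventually)
    qed
  qed (use assms in \<open>auto simp: indicator_def\<close>)
  then show ?thesis by simp
qed

lemma norm_laplace_diff_integral_le:
  assumes "laplace_admissible \<phi>" "continuous_on UNIV \<phi>" and d: "0 < d" "d \<le> Re w"
  shows "norm (laplace \<phi> w - integral {0..a} (\<lambda>x. exp (- (w * of_real x)) * of_real (\<phi> x)))
    \<le> (\<integral>x. indicator {a<..} x * (exp (- d * x) * \<phi> x) \<partial>lborel)"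
proof -
  define F where "F x = exp (- (w * of_real x)) * of_real (\<phi> x)" for x :: real
  have F: "integrable lborel F"
    unfolding F_def by (rule integrable_laplace) (use assms in auto)
  have "set_integrable lborel {0..a} F"
    unfolding F_def
    by (intro borel_integrable_atLeastAtMost' continuous_intros continuous_on_subset[OF assms(2)]) auto
  then have "integral {0..a} F = (\<integral>x. indicator {0..a} x *\<^sub>R F x \<partial>lborel)"
    using set_borel_integral_eq_integral(2) by (metis set_lebesgue_integral_def)
  then have "laplace \<phi> w - integral {0..a} F
      = (\<integral>x. F x \<partial>lborel) - (\<integral>x. indicator {0..a} x *\<^sub>R F x \<partial>lborel)"
    by (simp add: laplace_def F_def)
  also have "\<dots> = (\<integral>x. F x - indicator {0..a} x *\<^sub>R F x \<partial>lborel)"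
    by (rule Bochner_Integration.integral_diff[symmetric]) (auto intro: F integrable_mult_indicator)
  also have "\<dots> = (\<integral>x. indicator {a<..} x *\<^sub>R F x \<partial>lborel)"
    by (rule Bochner_Integration.integral_cong)
      (auto simp: indicator_def F_def laplace_admissible_vanishes[OF assms(1)])
  also have "norm \<dots> \<le> (\<integral>x. norm (indicator {a<..} x *\<^sub>R F x) \<partial>lborel)"
    by (rule integral_norm_bound)
  also have "\<dots> \<le> (\<integral>x. indicator {a<..} x * (exp (- d * x) * \<phi> x) \<partial>lborel)"
  proof (rule integral_mono)
    show "integrable lborel (\<lambda>x. norm (indicator {a<..} x *\<^sub>R F x))"
      by (intro integrable_norm integrable_mult_indicator F) simp
    show "integrable lborel (\<lambda>x. indicator {a<..} x * (exp (- d * x) * \<phi> x))"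
      using integrable_mult_indicator[OF _ laplace_admissible_integrable[OF assms(1,3)]] by simp
  next
    fix x :: real
    show "norm (indicator {a<..} x *\<^sub>R F x) \<le> indicator {a<..} x * (exp (- d * x) * \<phi> x)"
    proof (cases "x > a \<and> 0 \<le> x")
      case True
      then have "exp (- Re w * x) \<le> exp (- d * x)"
        using d by (simp add: mult_right_mono)
      then show ?thesis
        using True laplace_admissible_nonneg[OF assms(1), of x] unfolding F_def
        by (auto simp: norm_mult norm_exp_eq_Re indicator_def intro: mult_right_mono)
    next
      case False
      then show ?thesis
        by (cases "x > a") (simp_all add: F_def indicator_def laplace_admissible_vanishes[OF assms(1)])
    qed
  qed
  finally show ?thesis
    by (simp only: F_def[abs_def])
qed

lemma uniform_limit_integral_laplace_interval:
  assumes "laplace_admissible \<phi>" "continuous_on UNIV \<phi>" "0 < d"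
  shows "uniform_limit {w. d \<le> Re w}
    (\<lambda>n w. integral {0..real n} (\<lambda>x. exp (- (w * of_real x)) * of_real (\<phi> x))) (laplace \<phi>) sequentially"
  unfolding uniform_limit_iff
proof (intro allI impI)
  fix e :: real assume "e > 0"
  define T where "T n = (\<integral>x. indicator {real n<..} x * (exp (- d * x) * \<phi> x) \<partial>lborel)" for n :: nat
  have "T \<longlonglongrightarrow> 0"
    unfolding T_def
    by (intro tendsto_integral_indicator_greaterThan laplace_admissible_integrable[OF assms(1,3)])
  with \<open>e > 0\<close> have "\<forall>\<^sub>F n in sequentially. T n < e"
    by (auto dest: order_tendstoD)
  then show "\<forall>\<^sub>F n in sequentially. \<forall>w\<in>{w. d \<le> Re w}.
      dist (integral {0..real n} (\<lambda>x. exp (- (w * of_real x)) * of_real (\<phi> x))) (laplace \<phi> w) < e"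
  proof eventually_elim
    case (elim n)
    show ?case
    proof
      fix w assume "w \<in> {w. d \<le> Re w}"
      then have "d \<le> Re w" by simp
      from le_less_trans[OF norm_laplace_diff_integral_le[OF assms this] elim[unfolded T_def]]
      show "dist (integral {0..real n} (\<lambda>x. exp (- (w * of_real x)) * of_real (\<phi> x))) (laplace \<phi> w) < e"
        by (simp add: dist_norm norm_minus_commute)
    qed
  qed
qed

lemma holomorphic_on_laplace:
  assumes "laplace_admissible \<phi>" "continuous_on UNIV \<phi>"
  shows "laplace \<phi> holomorphic_on {z. 0 < Re z}"
proof (rule holomorphic_uniform_sequence[OF open_halfspace_Re_gt])
  fix n :: nat
  show "(\<lambda>z. integral {0..real n} (\<lambda>x. exp (- (z * of_real x)) * of_real (\<phi> x)))
      holomorphic_on {z. 0 < Re z}"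
    using holomorphic_on_integral_laplace_interval[OF assms(2)] by (rule holomorphic_on_subset) auto
next
  fix z :: complex assume "z \<in> {z. 0 < Re z}"
  then have d: "0 < Re z / 2" by simp
  have "Re z / 2 \<le> Re w" if "w \<in> cball z (Re z / 2)" for w
    using that abs_Re_le_cmod[of "z - w"] by (auto simp: dist_norm)
  then have disc: "cball z (Re z / 2) \<subseteq> {w. Re z / 2 \<le> Re w}"
    by blast
  then have "cball z (Re z / 2) \<subseteq> {z. 0 < Re z}"
    using d by fastforce
  with d uniform_limit_on_subset[OF uniform_limit_integral_laplace_interval[OF assms d] disc]
  show "\<exists>d>0. cball z d \<subseteq> {z. 0 < Re z} \<and> uniform_limit (cball z d)
      (\<lambda>n z. integral {0..real n} (\<lambda>x. exp (- (z * of_real x)) * of_real (\<phi> x))) (laplace \<phi>) sequentially"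
    by blast
qed

section \<open>Convolution\<close>

lemma conv0_eq_0: "t < 0 \<Longrightarrow> conv0 f g t = 0"
  by (simp add: conv0_def)

lemma conv0_eq_nn_integral:
  fixes f g :: "real \<Rightarrow> real"
  assumes [measurable]: "f \<in> borel_measurable borel" "g \<in> borel_measurable borel"
    and nonneg: "\<And>x. 0 \<le> f x" "\<And>x. 0 \<le> g x"
    and vanish: "\<And>x. x < 0 \<Longrightarrow> f x = 0" "\<And>x. x < 0 \<Longrightarrow> g x = 0"
  shows "conv0 f g t = enn2real (\<integral>\<^sup>+s. ennreal (f s * g (t - s)) \<partial>lborel)"
proof -
  let ?F = "\<lambda>s. f s * g (t - s)"
  have F_eq: "?F s = indicator {0..t} s * ?F s" for s
    using vanish by (cases "s < 0"; cases "t - s < 0") (auto simp: indicator_def)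
  have F_nonneg: "0 \<le> ?F s" for s
    using nonneg by simp
  show ?thesis
  proof (cases "(\<integral>\<^sup>+s. ennreal (?F s) \<partial>lborel) < \<infinity>")
    case True
    then have "integrable lborel ?F"
      using F_nonneg by (intro integrableI_nonneg) auto
    then have int: "set_integrable lborel {0..t} ?F"
      unfolding set_integrable_def by (subst (asm) F_eq) simp
    have "conv0 f g t = (LINT s:{0..t}|lborel. ?F s)"
      unfolding conv0_def using set_borel_integral_eq_integral(2)[OF int] by simp
    also have "\<dots> = (\<integral>s. ?F s \<partial>lborel)"
      unfolding set_lebesgue_integral_def by (subst (2) F_eq) simp
    also have "\<dots> = enn2real (\<integral>\<^sup>+s. ennreal (?F s) \<partial>lborel)"
      using F_nonneg by (intro integral_eq_nn_integral) auto
    finally show ?thesis .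
  next
    case False
    \<comment> \<open>both sides are the junk value 0: \<open>integral\<close> of a non-integrable function, \<open>enn2real \<infinity>\<close>\<close>
    have "\<not> ?F integrable_on {0..t}"
    proof
      assume "?F integrable_on {0..t}"
      then have "?F absolutely_integrable_on {0..t}"
        using F_nonneg by (intro nonnegative_absolutely_integrable_1) auto
      then have "integrable lborel (\<lambda>s. indicator {0..t} s *\<^sub>R ?F s)"
        unfolding set_integrable_def by (subst (asm) integrable_completion) auto
      then have "integrable lborel ?F"
        by (subst F_eq) simp
      with False F_nonneg show False
        by (simp add: integrable_iff_bounded)
    qed
    then show ?thesis
      using False by (simp add: conv0_def not_integrable_integral less_top[symmetric])
  qed
qed

lemma conv0_eq_lborel_integral:
  fixes f g :: "real \<Rightarrow> real"
  assumes "laplace_admissible f" "laplace_admissible g"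
  shows "conv0 f g t = (\<integral>s. f s * g (t - s) \<partial>lborel)"
proof -
  note [measurable] = laplace_admissible_measurable[OF assms(1)] laplace_admissible_measurable[OF assms(2)]
  show ?thesis
    using assms by (subst integral_eq_nn_integral)
    (auto simp: conv0_eq_nn_integral laplace_admissible_measurable laplace_admissible_nonneg
      laplace_admissible_vanishes)
qed

lemma ennreal_conv0_le_nn_integral:
  fixes f g :: "real \<Rightarrow> real"
  assumes "laplace_admissible f" "laplace_admissible g"
  shows "ennreal (conv0 f g t) \<le> (\<integral>\<^sup>+s. ennreal (f s * g (t - s)) \<partial>lborel)"
  using assms
  by (simp add: conv0_eq_nn_integral laplace_admissible_measurable laplace_admissible_nonneg
      laplace_admissible_vanishes ennreal_enn2real_if)

lemma nn_integral_laplace_conv: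
  fixes f g :: "real \<Rightarrow> real"
  assumes [measurable]: "f \<in> borel_measurable borel" "g \<in> borel_measurable borel"
    and nonneg: "\<And>x. 0 \<le> f x"
  shows "(\<integral>\<^sup>+t. (\<integral>\<^sup>+s. ennreal (exp (- \<sigma> * t) * (f s * g (t - s))) \<partial>lborel) \<partial>lborel)
     = (\<integral>\<^sup>+s. ennreal (exp (- \<sigma> * s) * f s) \<partial>lborel) * (\<integral>\<^sup>+x. ennreal (exp (- \<sigma> * x) * g x) \<partial>lborel)"
proof -
  have shift: "(\<integral>\<^sup>+t. ennreal (exp (- \<sigma> * (t - s)) * g (t - s)) \<partial>lborel)
      = (\<integral>\<^sup>+x. ennreal (exp (- \<sigma> * x) * g x) \<partial>lborel)" for s
    using nn_integral_real_affine[of "\<lambda>t. ennreal (exp (- \<sigma> * (t - s)) * g (t - s))" 1 s] by simp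
  have "(\<integral>\<^sup>+t. (\<integral>\<^sup>+s. ennreal (exp (- \<sigma> * t) * (f s * g (t - s))) \<partial>lborel) \<partial>lborel)
     = (\<integral>\<^sup>+s. (\<integral>\<^sup>+t. ennreal (exp (- \<sigma> * s) * f s) * ennreal (exp (- \<sigma> * (t - s)) * g (t - s)) \<partial>lborel) \<partial>lborel)"
    using nonneg
    by (subst lborel_pair.Fubini')
      (auto simp: algebra_simps ennreal_mult'[symmetric] simp flip: exp_add intro!: nn_integral_cong)
  also have "\<dots> = (\<integral>\<^sup>+s. ennreal (exp (- \<sigma> * s) * f s)
      * (\<integral>\<^sup>+t. ennreal (exp (- \<sigma> * (t - s)) * g (t - s)) \<partial>lborel) \<partial>lborel)"
    by (intro nn_integral_cong nn_integral_cmult) measurable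
  also have "\<dots> = (\<integral>\<^sup>+s. ennreal (exp (- \<sigma> * s) * f s) * (\<integral>\<^sup>+x. ennreal (exp (- \<sigma> * x) * g x) \<partial>lborel) \<partial>lborel)"
    unfolding shift ..
  also have "\<dots> = (\<integral>\<^sup>+s. ennreal (exp (- \<sigma> * s) * f s) \<partial>lborel) * (\<integral>\<^sup>+x. ennreal (exp (- \<sigma> * x) * g x) \<partial>lborel)"
    by (rule nn_integral_multc) measurable
  finally show ?thesis .
qed

lemma nn_integral_laplace_conv_finite:
  fixes f g :: "real \<Rightarrow> real"
  assumes "laplace_admissible f" "laplace_admissible g" "\<sigma> > 0"
  shows "(\<integral>\<^sup>+t. (\<integral>\<^sup>+s. ennreal (exp (- \<sigma> * t) * (f s * g (t - s))) \<partial>lborel) \<partial>lborel) < \<infinity>"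
  unfolding nn_integral_laplace_conv[OF laplace_admissible_measurable[OF assms(1)]
      laplace_admissible_measurable[OF assms(2)] laplace_admissible_nonneg[OF assms(1)]]
  using laplace_admissible_nn_integral_finite[OF assms(1,3)] laplace_admissible_nn_integral_finite[OF assms(2,3)]
  by (simp add: ennreal_mult_less_top)

lemma laplace_admissible_conv0:
  fixes f g :: "real \<Rightarrow> real"
  assumes f: "laplace_admissible f" and g: "laplace_admissible g"
  shows "laplace_admissible (conv0 f g)"
proof -
  note [measurable] = laplace_admissible_measurable[OF f] laplace_admissible_measurable[OF g]
  have conv_nonneg: "0 \<le> conv0 f g t" for t
    by (simp add: conv0_eq_lborel_integral[OF f g] laplace_admissible_nonneg[OF f]
        laplace_admissible_nonneg[OF g])
  have "(\<lambda>t. \<integral>s. f s * g (t - s) \<partial>lborel) \<in> borel_measurable borel"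
    by measurable
  then have [measurable]: "conv0 f g \<in> borel_measurable borel"
    by (simp add: conv0_eq_lborel_integral[OF f g, abs_def])
  have "integrable lborel (\<lambda>t. exp (- \<sigma> * t) * conv0 f g t)" if "\<sigma> > 0" for \<sigma>
  proof (rule integrableI_nonneg)
    have "ennreal (exp (- \<sigma> * t) * conv0 f g t)
        \<le> (\<integral>\<^sup>+s. ennreal (exp (- \<sigma> * t) * (f s * g (t - s))) \<partial>lborel)" for t
    proof -
      have "ennreal (exp (- \<sigma> * t) * conv0 f g t) = ennreal (exp (- \<sigma> * t)) * ennreal (conv0 f g t)"
        by (simp add: ennreal_mult')
      also have "\<dots> \<le> ennreal (exp (- \<sigma> * t)) * (\<integral>\<^sup>+s. ennreal (f s * g (t - s)) \<partial>lborel)"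
        by (intro mult_left_mono ennreal_conv0_le_nn_integral f g) simp
      also have "\<dots> = (\<integral>\<^sup>+s. ennreal (exp (- \<sigma> * t) * (f s * g (t - s))) \<partial>lborel)"
        by (simp add: nn_integral_cmult[symmetric] ennreal_mult')
      finally show ?thesis .
    qed
    then have "(\<integral>\<^sup>+t. ennreal (exp (- \<sigma> * t) * conv0 f g t) \<partial>lborel)
        \<le> (\<integral>\<^sup>+t. (\<integral>\<^sup>+s. ennreal (exp (- \<sigma> * t) * (f s * g (t - s))) \<partial>lborel) \<partial>lborel)"
      by (intro nn_integral_mono)
    then show "(\<integral>\<^sup>+t. ennreal (exp (- \<sigma> * t) * conv0 f g t) \<partial>lborel) < \<infinity>"
      using nn_integral_laplace_conv_finite[OF f g that] by (rule le_less_trans)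
  qed (auto simp: conv_nonneg)
  then show ?thesis
    unfolding laplace_admissible_def by (auto simp: conv_nonneg conv0_eq_0)
qed

lemma laplace_conv0:
  fixes f g :: "real \<Rightarrow> real"
  assumes f: "laplace_admissible f" and g: "laplace_admissible g" and z: "Re z > 0"
  shows "laplace (conv0 f g) z = laplace f z * laplace g z"
proof -
  note [measurable] = laplace_admissible_measurable[OF f] laplace_admissible_measurable[OF g]
  define G where "G t s = exp (- (z * of_real t)) * of_real (f s * g (t - s))" for t s :: real
  have norm_G: "norm (G t s) = exp (- Re z * t) * (f s * g (t - s))" for t s
    unfolding G_def using laplace_admissible_nonneg[OF f] laplace_admissible_nonneg[OF g]
    by (simp add: norm_mult norm_exp_eq_Re abs_mult)
  have G_measurable[measurable]: "(\<lambda>(t, s). G t s) \<in> borel_measurable (lborel \<Otimes>\<^sub>M lborel)"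
    unfolding G_def by measurable
  have G_integrable: "integrable (lborel \<Otimes>\<^sub>M lborel) (\<lambda>(t, s). G t s)"
  proof (rule integrableI_bounded)
    have "(\<lambda>p. ennreal (norm ((\<lambda>(t, s). G t s) p))) \<in> borel_measurable (lborel \<Otimes>\<^sub>M lborel)"
      by measurable
    then have "(\<integral>\<^sup>+p. ennreal (norm ((\<lambda>(t, s). G t s) p)) \<partial>(lborel \<Otimes>\<^sub>M lborel))
      = (\<integral>\<^sup>+t. (\<integral>\<^sup>+s. ennreal (exp (- Re z * t) * (f s * g (t - s))) \<partial>lborel) \<partial>lborel)"
      by (subst lborel.nn_integral_fst[symmetric]) (simp_all add: norm_G)
    then show "(\<integral>\<^sup>+p. ennreal (norm ((\<lambda>(t, s). G t s) p)) \<partial>(lborel \<Otimes>\<^sub>M lborel)) < \<infinity>"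
      using nn_integral_laplace_conv_finite[OF f g z] by simp
  qed simp
  have inner: "(\<integral>t. G t s \<partial>lborel) = exp (- (z * of_real s)) * of_real (f s) * laplace g z" for s
  proof -
    have "G t s = exp (- (z * of_real s)) * of_real (f s) * (exp (- (z * of_real (t - s))) * of_real (g (t - s)))" for t
      unfolding G_def by (simp add: algebra_simps flip: exp_add)
    moreover have "(\<integral>t. exp (- (z * of_real (t - s))) * of_real (g (t - s)) \<partial>lborel) = laplace g z"
      using lborel_integral_real_affine[of 1 "\<lambda>t. exp (- (z * of_real (t - s))) * of_real (g (t - s))" s]
      by (simp add: laplace_def)
    ultimately show ?thesis by simp
  qed
  have "laplace (conv0 f g) z = (\<integral>t. (\<integral>s. G t s \<partial>lborel) \<partial>lborel)"
    unfolding laplace_def G_def conv0_eq_lborel_integral[OF f g] by (simp del: of_real_mult)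
  also have "\<dots> = (\<integral>s. (\<integral>t. G t s \<partial>lborel) \<partial>lborel)"
    using lborel_pair.Fubini_integral[of G] G_integrable by simp
  also have "\<dots> = laplace f z * laplace g z"
    unfolding inner laplace_def by simp
  finally show ?thesis .
qed

section \<open>The Laplace transform of \<open>nu\<close> on the positive reals\<close>

lemma nn_integral_linear_times_gaussian:
  fixes s c :: real
  assumes "0 \<le> s" "0 < c"
  shows "(\<integral>\<^sup>+x. ennreal ((x + s) * exp (- (x\<^sup>2 / 2 + s * x) * c)) * indicator {0..} x \<partial>lborel)
    = ennreal (1 / c)"
proof -
  have "(\<integral>\<^sup>+x. ennreal ((x + s) * exp (- (x\<^sup>2 / 2 + s * x) * c)) * indicator {0..} x \<partial>lborel)
     = 0 - (- exp (- (0\<^sup>2 / 2 + s * 0) * c) / c)"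
  proof (rule nn_integral_FTC_atLeast)
    fix x :: real assume "0 \<le> x"
    show "((\<lambda>x. - exp (- (x\<^sup>2 / 2 + s * x) * c) / c) has_real_derivative
        (x + s) * exp (- (x\<^sup>2 / 2 + s * x) * c)) (at x)"
      using assms by (auto intro!: derivative_eq_intros simp: field_simps)
    show "0 \<le> (x + s) * exp (- (x\<^sup>2 / 2 + s * x) * c)"
      using \<open>0 \<le> x\<close> assms by simp
  next
    show "((\<lambda>x. - exp (- (x\<^sup>2 / 2 + s * x) * c) / c) \<longlongrightarrow> 0) at_top"
      using assms by real_asymp
  qed measurable
  then show ?thesis by simp
qed

lemma nn_integral_gaussian_exp_split:
  fixes s :: real
  assumes "0 < s"
  shows "(\<integral>\<^sup>+x. ennreal (exp (- (x\<^sup>2 / 2) - s * x)) * indicator {0..} x \<partial>lborel)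
       + (\<integral>\<^sup>+x. ennreal (exp (- (x\<^sup>2 / 2) - s * x) / (x + s)\<^sup>2) * indicator {0..} x \<partial>lborel)
    = ennreal (1 / s)"
proof -
  define E where "E x = exp (- (x\<^sup>2 / 2) - s * x)" for x
  have "(\<integral>\<^sup>+x. ennreal (E x + E x / (x + s)\<^sup>2) * indicator {0..} x \<partial>lborel) = 0 - (- E 0 / (0 + s))"
  proof (rule nn_integral_FTC_atLeast)
    fix x :: real assume "0 \<le> x"
    then have "x + s \<noteq> 0" using assms by simp
    have deriv: "((\<lambda>x. - E x / (x + s)) has_real_derivative
        (- (- (x + s) * E x) * (x + s) - - E x * 1) / ((x + s) * (x + s))) (at x)"
      unfolding E_def using \<open>x + s \<noteq> 0\<close>
      by (intro DERIV_divide) (auto intro!: derivative_eq_intros simp: algebra_simps)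
    have quotient: "(- (- y * e) * y - - e * 1) / (y * y) = e + e / y\<^sup>2" if "y \<noteq> 0" for y e :: real
      using that by (simp add: field_simps power2_eq_square)
    show "((\<lambda>x. - E x / (x + s)) has_real_derivative E x + E x / (x + s)\<^sup>2) (at x)"
      using deriv unfolding quotient[OF \<open>x + s \<noteq> 0\<close>] .
    show "0 \<le> E x + E x / (x + s)\<^sup>2"
      by (simp add: E_def)
  next
    show "((\<lambda>x. - E x / (x + s)) \<longlongrightarrow> 0) at_top"
      unfolding E_def using assms by real_asymp
  qed (simp add: E_def)
  also have "\<dots> = ennreal (1 / s)"
    by (simp add: E_def)
  finally show ?thesis
    unfolding E_def by (simp add: nn_integral_add[symmetric] distrib_right)
qed

lemma Gamma_three_halves_real: "Gamma (3/2 :: real) = sqrt pi / 2"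
proof -
  have "(1/2 :: real) \<notin> \<int>\<^sub>\<le>\<^sub>0"
    by (auto elim!: nonpos_Ints_cases)
  then have "Gamma (1/2 + 1 :: real) = 1/2 * Gamma (1/2)"
    by (rule Gamma_plus1)
  then show ?thesis
    by (simp add: Gamma_one_half_real)
qed

lemma nn_integral_sqrt_times_exp:
  fixes w :: real
  assumes "0 < w"
  shows "(\<integral>\<^sup>+u. ennreal (sqrt u * exp (- w * u)) * indicator {0..} u \<partial>lborel)
    = ennreal (sqrt pi / 2 / (w * sqrt w))"
proof -
  have "((\<lambda>t. t powr (3/2 - 1) / exp t) has_integral sqrt pi / 2) {0..}"
    using Gamma_integral_real[of "3/2"] by (simp add: Gamma_three_halves_real)
  then have "((\<lambda>t. sqrt t * exp (- t)) has_integral sqrt pi / 2) {0..}"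
    by (rule has_integral_eq[rotated]) (simp add: powr_half_sqrt exp_minus field_simps)
  then have "ennreal (sqrt pi / 2) = (\<integral>\<^sup>+t. ennreal (sqrt t * exp (- t)) * indicator {0..} t \<partial>lborel)"
    by (intro nn_integral_has_integral_lebesgue'[symmetric]) simp
  also have "\<dots> = ennreal w * (\<integral>\<^sup>+u. ennreal (sqrt (w * u) * exp (- (w * u))) * indicator {0..} (w * u) \<partial>lborel)"
    using nn_integral_real_affine[of "\<lambda>t. ennreal (sqrt t * exp (- t)) * indicator {0..} t" w 0] assms
    by simp
  also have "(\<integral>\<^sup>+u. ennreal (sqrt (w * u) * exp (- (w * u))) * indicator {0..} (w * u) \<partial>lborel)
      = ennreal (sqrt w) * (\<integral>\<^sup>+u. ennreal (sqrt u * exp (- w * u)) * indicator {0..} u \<partial>lborel)"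
    using assms
    by (subst nn_integral_cmult[symmetric])
      (auto intro!: nn_integral_cong simp: real_sqrt_mult ennreal_mult' indicator_def zero_le_mult_iff mult.assoc)
  finally have "ennreal (sqrt pi / 2)
      = ennreal (w * sqrt w) * (\<integral>\<^sup>+u. ennreal (sqrt u * exp (- w * u)) * indicator {0..} u \<partial>lborel)"
    using assms by (simp add: ennreal_mult' mult.assoc)
  then have "ennreal (1 / (w * sqrt w)) * ennreal (sqrt pi / 2)
      = (\<integral>\<^sup>+u. ennreal (sqrt u * exp (- w * u)) * indicator {0..} u \<partial>lborel)"
    using assms by (simp add: mult.assoc[symmetric] ennreal_mult'[symmetric])
  then show ?thesis
    using assms by (simp add: ennreal_mult'[symmetric] mult.commute)
qed

definition nu_kernel :: "real \<Rightarrow> real \<Rightarrow> real \<Rightarrow> real" where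
  "nu_kernel s u x = 2 / sqrt pi * sqrt u * exp (- (s\<^sup>2) * u) * ((x + s) * exp (- (x\<^sup>2 / 2 + s * x) * (2 * u + 1)))"

lemma nn_integral_nu_kernel_fst:
  assumes "0 \<le> s" "0 \<le> u"
  shows "(\<integral>\<^sup>+x. ennreal (nu_kernel s u x) * indicator {0..} x \<partial>lborel) = ennreal (exp (- (s\<^sup>2) * u) * nu u)"
proof -
  let ?c = "2 / sqrt pi * sqrt u * exp (- (s\<^sup>2) * u)"
  have "ennreal (nu_kernel s u x) = ennreal ?c * ennreal ((x + s) * exp (- (x\<^sup>2 / 2 + s * x) * (2 * u + 1)))"
    for x
    unfolding nu_kernel_def using assms by (intro ennreal_mult') simp
  then have "(\<integral>\<^sup>+x. ennreal (nu_kernel s u x) * indicator {0..} x \<partial>lborel)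
      = (\<integral>\<^sup>+x. ennreal ?c * (ennreal ((x + s) * exp (- (x\<^sup>2 / 2 + s * x) * (2 * u + 1))) * indicator {0..} x) \<partial>lborel)"
    by (simp add: mult.assoc)
  also have "\<dots> = ennreal ?c
      * (\<integral>\<^sup>+x. ennreal ((x + s) * exp (- (x\<^sup>2 / 2 + s * x) * (2 * u + 1))) * indicator {0..} x \<partial>lborel)"
    by (rule nn_integral_cmult) measurable
  also have "\<dots> = ennreal ?c * ennreal (1 / (2 * u + 1))"
    by (subst nn_integral_linear_times_gaussian) (use assms in auto)
  also have "\<dots> = ennreal (exp (- (s\<^sup>2) * u) * nu u)"
    using assms by (simp add: nu_def field_simps flip: ennreal_mult')
  finally show ?thesis .
qed

lemma nn_integral_nu_kernel_snd:
  assumes "0 \<le> x" "0 < s"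
  shows "(\<integral>\<^sup>+u. ennreal (nu_kernel s u x) * indicator {0..} u \<partial>lborel)
    = ennreal (exp (- (x\<^sup>2 / 2) - s * x) / (x + s)\<^sup>2)"
proof -
  let ?c = "2 / sqrt pi * (x + s) * exp (- (x\<^sup>2 / 2) - s * x)"
  have "x + s > 0" using assms by simp
  have "nu_kernel s u x = ?c * (sqrt u * exp (- ((x + s)\<^sup>2) * u))" for u
  proof -
    have "exp (- (s\<^sup>2) * u) * exp (- (x\<^sup>2 / 2 + s * x) * (2 * u + 1))
        = exp (- (x\<^sup>2 / 2) - s * x) * exp (- ((x + s)\<^sup>2) * u)"
      by (simp add: power2_eq_square algebra_simps flip: exp_add)
    then show ?thesis
      unfolding nu_kernel_def by (simp only: mult_ac)
  qed
  then have "(\<integral>\<^sup>+u. ennreal (nu_kernel s u x) * indicator {0..} u \<partial>lborel)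
      = (\<integral>\<^sup>+u. ennreal ?c * (ennreal (sqrt u * exp (- ((x + s)\<^sup>2) * u)) * indicator {0..} u) \<partial>lborel)"
    using \<open>x + s > 0\<close> by (intro nn_integral_cong) (simp add: ennreal_mult'[symmetric] indicator_def)
  also have "\<dots> = ennreal ?c * (\<integral>\<^sup>+u. ennreal (sqrt u * exp (- ((x + s)\<^sup>2) * u)) * indicator {0..} u \<partial>lborel)"
    by (rule nn_integral_cmult) measurable
  also have "\<dots> = ennreal ?c * ennreal (sqrt pi / 2 / ((x + s)\<^sup>2 * sqrt ((x + s)\<^sup>2)))"
    by (subst nn_integral_sqrt_times_exp) (use \<open>x + s > 0\<close> in auto)
  also have "\<dots> = ennreal (exp (- (x\<^sup>2 / 2) - s * x) / (x + s)\<^sup>2)"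
  proof -
    have "2 / sqrt pi * y * e * (sqrt pi / 2 / (y\<^sup>2 * sqrt (y\<^sup>2))) = e / y\<^sup>2" if "y > 0" for y e :: real
      using that by (simp add: field_simps power2_eq_square)
    from this[OF \<open>x + s > 0\<close>] show ?thesis
      using \<open>x + s > 0\<close> by (simp flip: ennreal_mult')
  qed
  finally show ?thesis .
qed

lemma nn_integral_laplace_nu:
  assumes "0 < s"
  shows "(\<integral>\<^sup>+u. ennreal (exp (- (s\<^sup>2) * u) * nu u) \<partial>lborel)
    = (\<integral>\<^sup>+x. ennreal (exp (- (x\<^sup>2 / 2) - s * x) / (x + s)\<^sup>2) * indicator {0..} x \<partial>lborel)"
proof -
  define K where "K u x = ennreal (nu_kernel s u x) * indicator {0..} x * indicator {0..} u" for u x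
  have [measurable]: "(\<lambda>(u, x). K u x) \<in> borel_measurable (lborel \<Otimes>\<^sub>M lborel)"
    unfolding K_def nu_kernel_def by measurable
  have "ennreal (exp (- (s\<^sup>2) * u) * nu u) = (\<integral>\<^sup>+x. K u x \<partial>lborel)" for u
  proof -
    have "ennreal (exp (- (s\<^sup>2) * u) * nu u)
        = (\<integral>\<^sup>+x. ennreal (nu_kernel s u x) * indicator {0..} x \<partial>lborel) * indicator {0..} u"
      using assms nn_integral_nu_kernel_fst[of s u] by (cases "0 \<le> u") (auto simp: nu_def)
    also have "\<dots> = (\<integral>\<^sup>+x. K u x \<partial>lborel)"
      unfolding K_def by (rule nn_integral_multc[symmetric]) (simp add: nu_kernel_def)
    finally show ?thesis .
  qed
  moreover have "(\<integral>\<^sup>+u. K u x \<partial>lborel) = ennreal (exp (- (x\<^sup>2 / 2) - s * x) / (x + s)\<^sup>2) * indicator {0..} x"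
    for x
  proof -
    have "(\<integral>\<^sup>+u. K u x \<partial>lborel) = (\<integral>\<^sup>+u. ennreal (nu_kernel s u x) * indicator {0..} u \<partial>lborel) * indicator {0..} x"
      unfolding K_def
      by (subst nn_integral_multc[symmetric]) (auto simp: nu_kernel_def mult_ac intro!: nn_integral_cong)
    also have "\<dots> = ennreal (exp (- (x\<^sup>2 / 2) - s * x) / (x + s)\<^sup>2) * indicator {0..} x"
      using assms nn_integral_nu_kernel_snd[of x s] by (cases "0 \<le> x") auto
    finally show ?thesis .
  qed
  moreover have "(\<integral>\<^sup>+u. (\<integral>\<^sup>+x. K u x \<partial>lborel) \<partial>lborel) = (\<integral>\<^sup>+x. (\<integral>\<^sup>+u. K u x \<partial>lborel) \<partial>lborel)"
    by (rule lborel_pair.Fubini') measurable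
  ultimately show ?thesis
    by simp
qed

lemma nn_integral_linear_gaussian_split:
  fixes s :: real
  assumes "0 \<le> s"
  shows "(\<integral>\<^sup>+x. ennreal (x * exp (- (x\<^sup>2 / 2) - s * x)) * indicator {0..} x \<partial>lborel)
       + ennreal s * (\<integral>\<^sup>+x. ennreal (exp (- (x\<^sup>2 / 2) - s * x)) * indicator {0..} x \<partial>lborel) = 1"
proof -
  define E where "E x = exp (- (x\<^sup>2 / 2) - s * x)" for x
  have "(\<integral>\<^sup>+x. ennreal (x * E x) * indicator {0..} x \<partial>lborel)
      + ennreal s * (\<integral>\<^sup>+x. ennreal (E x) * indicator {0..} x \<partial>lborel)
      = (\<integral>\<^sup>+x. ennreal (x * E x) * indicator {0..} x + ennreal s * (ennreal (E x) * indicator {0..} x) \<partial>lborel)"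
    by (subst nn_integral_add) (auto simp: E_def nn_integral_cmult)
  also have "\<dots> = (\<integral>\<^sup>+x. ennreal ((x + s) * E x) * indicator {0..} x \<partial>lborel)"
  proof (intro nn_integral_cong)
    fix x :: real
    show "ennreal (x * E x) * indicator {0..} x + ennreal s * (ennreal (E x) * indicator {0..} x)
        = ennreal ((x + s) * E x) * indicator {0..} x"
    proof (cases "0 \<le> x")
      case True
      have "ennreal ((x + s) * E x) = ennreal (x * E x) + ennreal (s * E x)"
        using True assms by (subst ennreal_plus[symmetric]) (simp_all add: E_def distrib_right)
      then show ?thesis
        using True assms by (simp add: indicator_def ennreal_mult')
    qed (simp add: indicator_def)
  qed
  also have "\<dots> = 1"
  proof -
    have "exp (- (x\<^sup>2 / 2 + s * x) * 1) = E x" for x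
      by (simp add: E_def)
    then show ?thesis
      using nn_integral_linear_times_gaussian[OF assms, of 1] by simp
  qed
  finally show ?thesis
    unfolding E_def .
qed

definition rayleigh :: "real \<Rightarrow> real" where
  "rayleigh x = (if 0 \<le> x then x * exp (- (x\<^sup>2 / 2)) else 0)"

lemma nn_integral_laplace_rayleigh:
  "(\<integral>\<^sup>+x. ennreal (exp (- s * x) * rayleigh x) \<partial>lborel)
    = (\<integral>\<^sup>+x. ennreal (x * exp (- (x\<^sup>2 / 2) - s * x)) * indicator {0..} x \<partial>lborel)"
proof (rule nn_integral_cong)
  fix x :: real
  show "ennreal (exp (- s * x) * rayleigh x) = ennreal (x * exp (- (x\<^sup>2 / 2) - s * x)) * indicator {0..} x"
    by (cases "0 \<le> x") (auto simp: rayleigh_def indicator_def algebra_simps simp flip: exp_add)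
qed

lemma integral_laplace_nu_real:
  fixes s :: real
  assumes "0 < s"
  shows "(\<integral>u. exp (- (s\<^sup>2) * u) * nu u \<partial>lborel) = (\<integral>x. exp (- s * x) * rayleigh x \<partial>lborel) / s"
proof -
  define E where "E x = exp (- (x\<^sup>2 / 2) - s * x)" for x
  define A where "A = (\<integral>\<^sup>+x. ennreal (E x / (x + s)\<^sup>2) * indicator {0..} x \<partial>lborel)"
  define e where "e = (\<integral>\<^sup>+x. ennreal (E x) * indicator {0..} x \<partial>lborel)"
  define B where "B = (\<integral>\<^sup>+x. ennreal (x * E x) * indicator {0..} x \<partial>lborel)"
  have eA: "e + A = ennreal (1 / s)"
    unfolding e_def A_def E_def by (rule nn_integral_gaussian_exp_split[OF assms])
  have Be: "B + ennreal s * e = 1"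
    unfolding B_def e_def E_def using assms by (intro nn_integral_linear_gaussian_split) simp
  have "e + A < \<infinity>" "B + ennreal s * e < \<infinity>"
    unfolding eA Be by simp_all
  then have finite: "e < \<infinity>" "A < \<infinity>" "B < \<infinity>"
    by simp_all
  have "enn2real e + enn2real A = enn2real (e + A)"
    using finite by (simp add: enn2real_plus)
  also have "\<dots> = 1 / s"
    using eA assms by simp
  finally have eA_real: "enn2real e + enn2real A = 1 / s" .
  have "enn2real B + s * enn2real e = enn2real (B + ennreal s * e)"
    using finite assms by (simp add: enn2real_plus ennreal_mult_less_top enn2real_mult)
  also have "\<dots> = 1"
    using Be by simp
  finally have Be_real: "enn2real B + s * enn2real e = 1" .
  have "enn2real A = enn2real B / s"
    using eA_real Be_real assms by (simp add: field_simps)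
  moreover have "(\<integral>u. exp (- (s\<^sup>2) * u) * nu u \<partial>lborel) = enn2real A"
  proof -
    have "(\<integral>u. exp (- (s\<^sup>2) * u) * nu u \<partial>lborel)
        = enn2real (\<integral>\<^sup>+u. ennreal (exp (- (s\<^sup>2) * u) * nu u) \<partial>lborel)"
      by (rule integral_eq_nn_integral) (auto simp: nu_def)
    then show ?thesis
      unfolding nn_integral_laplace_nu[OF assms] A_def E_def .
  qed
  moreover have "(\<integral>x. exp (- s * x) * rayleigh x \<partial>lborel) = enn2real B"
    unfolding B_def E_def nn_integral_laplace_rayleigh[symmetric]
    by (rule integral_eq_nn_integral) (auto simp: rayleigh_def)
  ultimately show ?thesis
    by simp
qed

section \<open>Holomorphy of \<open>N1\<close> and analytic continuation\<close>

lemma continuous_on_nu: "continuous_on UNIV nu"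
proof -
  have "continuous_on UNIV (\<lambda>x. 2 / sqrt pi * sqrt (max x 0) / (2 * max x 0 + 1))"
    by (intro continuous_intros) (auto simp: max_def)
  also have "(\<lambda>x. 2 / sqrt pi * sqrt (max x 0) / (2 * max x 0 + 1)) = nu"
    by (auto simp: nu_def max_def)
  finally show ?thesis .
qed

lemma laplace_admissible_nu: "laplace_admissible nu"
proof (rule laplace_admissible_bounded)
  fix x :: real
  show "nu x \<le> 2"
  proof (cases "0 \<le> x")
    case True
    have "sqrt x \<le> 2 * x + 1"
    proof (cases "x \<le> 1")
      case True
      then show ?thesis using \<open>0 \<le> x\<close> by (simp add: real_sqrt_le_1_iff add_increasing)
    next
      case False
      then show ?thesis using real_sqrt_le_mono[of x "x * x"] by auto
    qed
    moreover have "1 \<le> sqrt pi"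
      using pi_gt3 by simp
    ultimately have "2 / sqrt pi * (sqrt x / (2 * x + 1)) \<le> 2 * 1"
      using True by (intro mult_mono) (auto simp: divide_le_eq)
    then show ?thesis
      using True by (simp add: nu_def)
  qed (simp add: nu_def)
qed (auto simp: nu_def intro: borel_measurable_continuous_onI[OF continuous_on_nu])

lemma continuous_on_rayleigh: "continuous_on UNIV rayleigh"
proof -
  have "continuous_on UNIV (\<lambda>x::real. max x 0 * exp (- ((max x 0)\<^sup>2 / 2)))"
    by (intro continuous_intros) auto
  also have "(\<lambda>x::real. max x 0 * exp (- ((max x 0)\<^sup>2 / 2))) = rayleigh"
    by (auto simp: rayleigh_def max_def)
  finally show ?thesis .
qed

lemma laplace_admissible_rayleigh: "laplace_admissible rayleigh"
proof (rule laplace_admissible_bounded)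
  fix x :: real
  show "rayleigh x \<le> 1"
  proof (cases "0 \<le> x")
    case True
    have "x \<le> 1 + x\<^sup>2 / 2"
      using sum_squares_ge_zero[of "x - 1" 0] by (simp add: power2_eq_square algebra_simps)
    also have "\<dots> \<le> exp (x\<^sup>2 / 2)"
      by (rule exp_ge_add_one_self_aux) simp
    finally have "x * exp (- (x\<^sup>2 / 2)) \<le> exp (x\<^sup>2 / 2) * exp (- (x\<^sup>2 / 2))"
      by (intro mult_right_mono) auto
    then show ?thesis
      using True by (simp add: rayleigh_def flip: exp_add)
  qed (simp add: rayleigh_def)
qed (auto simp: rayleigh_def intro: borel_measurable_continuous_onI[OF continuous_on_rayleigh])

lemma Re_csqrt_pos:
  assumes "0 < Re z"
  shows "0 < Re (csqrt z)"
proof (rule ccontr)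
  assume "\<not> 0 < Re (csqrt z)"
  then have "Re (csqrt z) = 0"
    using Re_csqrt[of z] by simp
  have "Re z = Re ((csqrt z)\<^sup>2)"
    by simp
  also have "\<dots> = - (Im (csqrt z))\<^sup>2"
    using \<open>Re (csqrt z) = 0\<close> by (simp add: power2_eq_square)
  finally show False
    using assms by (smt (verit) zero_le_power2)
qed

lemma Psi_eq_laplace_rayleigh:
  assumes "0 < Re s"
  shows "Psi (- s) = laplace rayleigh s"
proof -
  have "Psi (- s) = integral {0..} (\<lambda>x. exp (- (s * of_real x)) * of_real (rayleigh x))"
    unfolding Psi_def
    by (intro integral_cong) (simp add: rayleigh_def exp_of_real[symmetric] mult_exp_exp algebra_simps)
  then show ?thesis
    using laplace_has_integral[OF laplace_admissible_rayleigh assms] by (simp add: integral_unique)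
qed

lemma N1_eq_laplace_rayleigh:
  assumes "0 < Re z"
  shows "N1 z = laplace rayleigh (csqrt z) / csqrt z"
  unfolding N1_def using Psi_eq_laplace_rayleigh[OF Re_csqrt_pos[OF assms]] by simp

lemma holomorphic_on_N1: "N1 holomorphic_on {z. 0 < Re z}"
proof -
  have csqrt: "csqrt holomorphic_on {z. 0 < Re z}"
    by (intro holomorphic_intros) (auto simp: complex_nonpos_Reals_iff)
  have "csqrt ` {z. 0 < Re z} \<subseteq> {z. 0 < Re z}"
    using Re_csqrt_pos by auto
  from holomorphic_on_compose_gen[OF csqrt
      holomorphic_on_laplace[OF laplace_admissible_rayleigh continuous_on_rayleigh] this]
  have "(\<lambda>z. laplace rayleigh (csqrt z)) holomorphic_on {z. 0 < Re z}"
    by (simp add: o_def)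
  then have "(\<lambda>z. laplace rayleigh (csqrt z) / csqrt z) holomorphic_on {z. 0 < Re z}"
    using csqrt by (intro holomorphic_on_divide) auto
  then show ?thesis
    by (rule holomorphic_cong[THEN iffD1, rotated -1]) (auto simp: N1_eq_laplace_rayleigh)
qed

lemma laplace_nu_of_real:
  assumes "0 < s"
  shows "laplace nu (of_real (s\<^sup>2)) = N1 (of_real (s\<^sup>2))"
proof -
  have "csqrt (of_real (s\<^sup>2)) = of_real s"
    using assms by (simp add: csqrt_of_real)
  then have "N1 (of_real (s\<^sup>2)) = laplace rayleigh (of_real s) / of_real s"
    using N1_eq_laplace_rayleigh[of "of_real (s\<^sup>2)"] assms by simp
  then show ?thesis
    unfolding laplace_of_real integral_laplace_nu_real[OF assms] by simp
qed

lemma laplace_nu: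
  assumes "0 < Re z"
  shows "laplace nu z = N1 z"
proof -
  let ?S = "{z. 0 < Re z}" and ?U = "complex_of_real ` {0<..}"
  have "(\<lambda>z. laplace nu z - N1 z) z = 0"
  proof (rule analytic_continuation[where f = "\<lambda>z. laplace nu z - N1 z" and S = ?S and U = ?U and \<xi> = 1])
    show "(\<lambda>z. laplace nu z - N1 z) holomorphic_on ?S"
      by (intro holomorphic_intros holomorphic_on_laplace[OF laplace_admissible_nu continuous_on_nu]
          holomorphic_on_N1)
    show "open ?S" "connected ?S"
      by (rule open_halfspace_Re_gt connected_halfspace_Re_gt)+
    show "?U \<subseteq> ?S" "1 \<in> ?S" "z \<in> ?S"
      using assms by auto
    show "1 islimpt ?U"
    proof (unfold islimpt_approachable, intro allI impI)
      fix e :: real assume "e > 0"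
      then show "\<exists>x'\<in>?U. x' \<noteq> 1 \<and> dist x' 1 < e"
        by (intro bexI[of _ "of_real (1 + e / 2)"]) (auto simp: complex_eq_iff dist_norm)
    qed
  next
    fix w assume "w \<in> ?U"
    then obtain r where "r > 0" "w = of_real r"
      by blast
    then show "laplace nu w - N1 w = 0"
      using laplace_nu_of_real[of "sqrt r"] by simp
  qed
  then show ?thesis
    by simp
qed

lemma laplace_nu_conv_pow:
  "laplace_admissible (nu_conv_pow (Suc m)) \<and> (\<forall>z. 0 < Re z \<longrightarrow> laplace (nu_conv_pow (Suc m)) z = N1 z ^ Suc m)"
proof (induction m)
  case 0
  then show ?case
    using laplace_admissible_nu laplace_nu by simp
next
  case (Suc m)
  then have IH: "laplace_admissible (nu_conv_pow (Suc m))"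
    "\<And>z. 0 < Re z \<Longrightarrow> laplace (nu_conv_pow (Suc m)) z = N1 z ^ Suc m"
    by auto
  then show ?case
    using laplace_admissible_conv0[OF laplace_admissible_nu IH(1)]
      laplace_conv0[OF laplace_admissible_nu IH(1)] laplace_nu
    by simp
qed

theorem propositionA1:
  fixes n :: nat and z :: complex
  assumes "Re z > 0"
  shows "(n = 0 \<longrightarrow> N1 z ^ n = 1) \<and>
         (n \<ge> 1 \<longrightarrow>
            ((\<lambda>u::real. exp (- (z * of_real u)) * of_real (nu_conv_pow n u))
               has_integral N1 z ^ n) {0..})"
proof (intro conjI impI)
  show "n = 0 \<Longrightarrow> N1 z ^ n = 1"
    by simp
  assume "n \<ge> 1"
  then obtain m where n: "n = Suc m"
    by (cases n) auto
  show "((\<lambda>u::real. exp (- (z * of_real u)) * of_real (nu_conv_pow n u)) has_integral N1 z ^ n) {0..}"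
    using laplace_has_integral[of "nu_conv_pow n" z] laplace_nu_conv_pow[of m] assms
    unfolding n by simp
qed

end
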